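(* Let $\iota$ be a continuous involution of $G$, $H$ a pro-$p$ open compact subgroup of $G$ and $\chi$ a character of $H$. Suppose there is $w\in G$ with $\iota(H)=H^w$ and $\chi^{-1}\circ\iota=\chi^w$. Then for every $g\in G$, the character $\chi^g$ is trivial on $H^g\cap G^\iota$ if and only if $w\,\iota(g)\,g^{-1}$ intertwines $\chi$.
   Context: $F$ is a non-archimedean locally compact field of odd residue characteristic $p$, $A$ a central simple $F$-algebra and $G=A^\times$. $G^\iota$ is the fixed-point subgroup of $\iota$. For $g\in G$: $H^g=g^{-1}Hg$ and $\chi^g(x)=\chi(gxg^{-1})$ for $x\in H^g$. An element $\gamma\in G$ intertwines $\chi$ if $\chi(h)=\chi^\gamma(h)$ for all $h\in H\cap H^\gamma$. *)

theory Defs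
  imports "HOL-Analysis.Analysis"
begin

definition abs_val :: "('f::field \<Rightarrow> real) \<Rightarrow> bool" where
  "abs_val v \<longleftrightarrow> (\<forall>x. v x \<ge> 0) \<and> (\<forall>x. v x = 0 \<longleftrightarrow> x = 0) \<and>
     (\<forall>x y. v (x * y) = v x * v y) \<and> (\<forall>x y. v (x + y) \<le> v x + v y)"

definition F_top :: "('f::field \<Rightarrow> real) \<Rightarrow> 'f topology" where
  "F_top v = Metric_space.mtopology UNIV (\<lambda>x y. v (x - y))"

text \<open>Non-archimedean, non-trivially valued, locally compact field whose residue
  field has characteristic p (i.e. v(p) < 1).\<close>
definition nonarch_local_field :: "('f::field \<Rightarrow> real) \<Rightarrow> nat \<Rightarrow> bool" where
  "nonarch_local_field v p \<longleftrightarrow> abs_val v \<and>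
     (\<forall>x y. v (x + y) \<le> max (v x) (v y)) \<and>
     (\<exists>x. v x \<noteq> 0 \<and> v x \<noteq> 1) \<and>
     locally_compact_space (F_top v) \<and>
     prime p \<and> v (of_nat p) < 1"

text \<open>A is a ring type 'a; the F-algebra structure is given by the ring embedding e : F \<rightarrow> A
  (scalar multiplication c\<cdot>a = e c * a); b 0, ..., b (n-1) is an F-basis of A.\<close>

definition is_basis :: "('f::field \<Rightarrow> 'a::ring_1) \<Rightarrow> nat \<Rightarrow> (nat \<Rightarrow> 'a) \<Rightarrow> bool" where
  "is_basis e n b \<longleftrightarrow>
     (\<forall>a. \<exists>!c::nat \<Rightarrow> 'f. (\<forall>i\<ge>n. c i = 0) \<and> a = (\<Sum>i<n. e (c i) * b i))"

definition two_sided_ideal :: "'a::ring_1 set \<Rightarrow> bool" where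
  "two_sided_ideal I \<longleftrightarrow> 0 \<in> I \<and> (\<forall>x\<in>I. \<forall>y\<in>I. x + y \<in> I) \<and> (\<forall>x\<in>I. - x \<in> I) \<and>
     (\<forall>x\<in>I. \<forall>a. a * x \<in> I \<and> x * a \<in> I)"

definition central_simple_algebra ::
    "('f::field \<Rightarrow> 'a::ring_1) \<Rightarrow> nat \<Rightarrow> (nat \<Rightarrow> 'a) \<Rightarrow> bool" where
  "central_simple_algebra e n b \<longleftrightarrow>
     e 1 = 1 \<and> (\<forall>x y. e (x + y) = e x + e y) \<and> (\<forall>x y. e (x * y) = e x * e y) \<and>
     (\<forall>c a. e c * a = a * e c) \<and>
     (\<forall>a. (\<forall>a'. a * a' = a' * a) \<longrightarrow> a \<in> range e) \<and>
     is_basis e n b \<and>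
     e 1 \<noteq> 0 \<and> (\<forall>I::'a set. two_sided_ideal I \<longrightarrow> I = {0} \<or> I = UNIV)"

text \<open>Coordinates w.r.t. the basis, the sup-norm and the resulting (basis-independent)
  topology of A.\<close>
definition coord :: "('f::field \<Rightarrow> 'a::ring_1) \<Rightarrow> nat \<Rightarrow> (nat \<Rightarrow> 'a) \<Rightarrow> 'a \<Rightarrow> nat \<Rightarrow> 'f" where
  "coord e n b a = (THE c. (\<forall>i\<ge>n. c i = 0) \<and> a = (\<Sum>i<n. e (c i) * b i))"

definition A_norm :: "('f::field \<Rightarrow> real) \<Rightarrow> ('f \<Rightarrow> 'a::ring_1) \<Rightarrow> nat \<Rightarrow> (nat \<Rightarrow> 'a) \<Rightarrow> 'a \<Rightarrow> real" where
  "A_norm v e n b a = Max ((\<lambda>i. v (coord e n b a i)) ` {..<n})"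

definition A_top :: "('f::field \<Rightarrow> real) \<Rightarrow> ('f \<Rightarrow> 'a::ring_1) \<Rightarrow> nat \<Rightarrow> (nat \<Rightarrow> 'a) \<Rightarrow> 'a topology" where
  "A_top v e n b = Metric_space.mtopology UNIV (\<lambda>x y. A_norm v e n b (x - y))"

definition units :: "'a::ring_1 set" where
  "units = {a. \<exists>a'. a * a' = 1 \<and> a' * a = 1}"

definition ginv :: "'a::ring_1 \<Rightarrow> 'a" where
  "ginv a = (THE a'. a * a' = 1 \<and> a' * a = 1)"

definition G_top :: "('f::field \<Rightarrow> real) \<Rightarrow> ('f \<Rightarrow> 'a::ring_1) \<Rightarrow> nat \<Rightarrow> (nat \<Rightarrow> 'a) \<Rightarrow> 'a topology" where
  "G_top v e n b = subtopology (A_top v e n b) units"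

definition subgroup_of_units :: "'a::ring_1 set \<Rightarrow> bool" where
  "subgroup_of_units H \<longleftrightarrow> H \<subseteq> units \<and> 1 \<in> H \<and> (\<forall>x\<in>H. \<forall>y\<in>H. x * y \<in> H) \<and>
     (\<forall>x\<in>H. ginv x \<in> H)"

definition conj_set :: "'a::ring_1 set \<Rightarrow> 'a \<Rightarrow> 'a set" where
  "conj_set H g = (\<lambda>h. ginv g * h * g) ` H"

definition conj_char :: "('a::ring_1 \<Rightarrow> complex) \<Rightarrow> 'a \<Rightarrow> 'a \<Rightarrow> complex" where
  "conj_char chi g x = chi (g * x * ginv g)"

definition fixed_points :: "('a::ring_1 \<Rightarrow> 'a) \<Rightarrow> 'a set" where
  "fixed_points iota = {x \<in> units. iota x = x}"

definition continuous_involution :: "'a::ring_1 topology \<Rightarrow> ('a \<Rightarrow> 'a) \<Rightarrow> bool" where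
  "continuous_involution T iota \<longleftrightarrow>
     (\<forall>x\<in>units. iota x \<in> units) \<and> (\<forall>x\<in>units. \<forall>y\<in>units. iota (x * y) = iota x * iota y) \<and>
     (\<forall>x\<in>units. iota (iota x) = x) \<and> continuous_map T T iota"

text \<open>Pro-p group (compact group, every open normal subgroup of p-power index;
  Hausdorff and total disconnectedness are automatic inside G).\<close>
definition normal_in :: "'a::ring_1 set \<Rightarrow> 'a set \<Rightarrow> bool" where
  "normal_in N H \<longleftrightarrow> subgroup_of_units N \<and> N \<subseteq> H \<and> (\<forall>h\<in>H. \<forall>x\<in>N. h * x * ginv h \<in> N)"

definition pro_p_group :: "'a::ring_1 topology \<Rightarrow> nat \<Rightarrow> 'a set \<Rightarrow> bool" where
  "pro_p_group T p H \<longleftrightarrow> subgroup_of_units H \<and> compactin T H \<and>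
     (\<forall>N. normal_in N H \<and> openin (subtopology T H) N \<longrightarrow>
        (\<exists>k. card ((\<lambda>h. (\<lambda>x. h * x) ` N) ` H) = p ^ k))"

definition character :: "'a::ring_1 topology \<Rightarrow> 'a set \<Rightarrow> ('a \<Rightarrow> complex) \<Rightarrow> bool" where
  "character T H chi \<longleftrightarrow> (\<forall>x\<in>H. chi x \<noteq> 0) \<and> (\<forall>x\<in>H. \<forall>y\<in>H. chi (x * y) = chi x * chi y) \<and>
     continuous_map (subtopology T H) euclidean chi"

definition intertwines :: "'a::ring_1 set \<Rightarrow> ('a \<Rightarrow> complex) \<Rightarrow> 'a \<Rightarrow> bool" where
  "intertwines H chi \<gamma> \<longleftrightarrow> (\<forall>h \<in> H \<inter> conj_set H \<gamma>. chi h = conj_char chi \<gamma> h)"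

end

theory Submission
  imports Defs "HOL-Algebra.Multiplicative_Group"
begin

text \<open>Put K = H^g, theta = chi^g and gamma = w iota(g) g^(-1). Conjugation by g turns
  "gamma intertwines chi" into "theta(y) theta(iota y) = 1 whenever y and iota y lie in K", using
  iota(H) = H^w and chi^(-1) o iota = chi^w. This condition is equivalent to triviality of theta on
  the iota-fixed points of K as soon as every k in K has a square root in K that iota fixes, resp.
  inverts, whenever it fixes, resp. inverts, k. Such roots exist since H is pro-p with p odd:
  m^(p^j) tends to 1, so limit points of m^((p^j+1)/2) are square roots of m, and continuity of
  iota passes the symmetry of m on to them.\<close>

section \<open>Units and conjugation\<close>

lemma ginv_unique: "(x::'a::ring_1) * y = 1 \<Longrightarrow> y * x = 1 \<Longrightarrow> ginv x = y"
  unfolding ginv_def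
proof (rule the_equality)
  fix z assume "x * y = 1" "y * x = 1" "x * z = 1 \<and> z * x = 1"
  then have "z = (y * x) * z" by simp
  also have "\<dots> = y" using \<open>x * z = 1 \<and> z * x = 1\<close> by (simp add: mult.assoc)
  finally show "z = y" .
qed simp

lemma ginv_inverse:
  assumes "(x::'a::ring_1) \<in> units" shows "x * ginv x = 1" "ginv x * x = 1"
proof -
  obtain y where "x * y = 1" "y * x = 1" using assms unfolding units_def by blast
  then show "x * ginv x = 1" "ginv x * x = 1" using ginv_unique[of x y] by simp_all
qed

lemmas ginv_right = ginv_inverse(1) and ginv_left = ginv_inverse(2)

lemma ginv_in_units: "(x::'a::ring_1) \<in> units \<Longrightarrow> ginv x \<in> units"
  using ginv_inverse[of x] unfolding units_def by blast

lemma one_in_units [simp]: "(1::'a::ring_1) \<in> units"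
  unfolding units_def by auto

lemma ginv_one [simp]: "ginv (1::'a::ring_1) = 1"
  by (rule ginv_unique) auto

lemma ginv_ginv: "(x::'a::ring_1) \<in> units \<Longrightarrow> ginv (ginv x) = x"
  by (rule ginv_unique) (auto simp: ginv_inverse)

lemma mult_ginv_mult:
  assumes "(x::'a::ring_1) \<in> units" "y \<in> units"
  shows "x * y * (ginv y * ginv x) = 1" "ginv y * ginv x * (x * y) = 1"
proof -
  have "x * y * (ginv y * ginv x) = x * (y * ginv y) * ginv x"
    "ginv y * ginv x * (x * y) = ginv y * (ginv x * x) * y" by (simp_all add: mult.assoc)
  then show "x * y * (ginv y * ginv x) = 1" "ginv y * ginv x * (x * y) = 1"
    using assms by (simp_all add: ginv_inverse)
qed

lemma ginv_mult: "(x::'a::ring_1) \<in> units \<Longrightarrow> y \<in> units \<Longrightarrow> ginv (x * y) = ginv y * ginv x"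
  using ginv_unique mult_ginv_mult by blast

lemma units_mult: assumes "(x::'a::ring_1) \<in> units" "y \<in> units" shows "x * y \<in> units"
  using mult_ginv_mult[OF assms] unfolding units_def by blast

lemma units_power: "(x::'a::ring_1) \<in> units \<Longrightarrow> x ^ k \<in> units"
  by (induction k) (auto intro: units_mult)

lemma ginv_power: "(x::'a::ring_1) \<in> units \<Longrightarrow> ginv (x ^ k) = ginv x ^ k"
proof (induction k)
  case (Suc k)
  have "ginv (x ^ Suc k) = ginv (x ^ k * x)" by (simp only: power_Suc2)
  also have "\<dots> = ginv x * ginv (x ^ k)" using Suc.prems by (simp add: ginv_mult units_power)
  finally show ?case using Suc by simp
qed simp

lemma ginv_cancel_left: "(x::'a::ring_1) \<in> units \<Longrightarrow> x * (ginv x * y) = y"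
  by (simp add: mult.assoc[symmetric] ginv_right)

lemma ginv_cancel_left': "(x::'a::ring_1) \<in> units \<Longrightarrow> ginv x * (x * y) = y"
  by (simp add: mult.assoc[symmetric] ginv_left)

lemmas units_simps = mult.assoc ginv_cancel_left ginv_cancel_left' ginv_right ginv_left
  ginv_mult ginv_ginv ginv_in_units units_mult

lemma conj_mult:
  "(h::'a::ring_1) \<in> units \<Longrightarrow> h * (x * y) * ginv h = (h * x * ginv h) * (h * y * ginv h)"
  by (simp add: units_simps)

lemma conj_ginv:
  "(h::'a::ring_1) \<in> units \<Longrightarrow> x \<in> units \<Longrightarrow> h * ginv x * ginv h = ginv (h * x * ginv h)"
  by (simp add: units_simps)

lemma conj_conj:
  "(h::'a::ring_1) \<in> units \<Longrightarrow> k \<in> units \<Longrightarrow> h * (k * x * ginv k) * ginv h = (h * k) * x * ginv (h * k)"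
  by (simp add: units_simps)

lemma conj_power: "(g::'a::ring_1) \<in> units \<Longrightarrow> (ginv g * m * g) ^ j = ginv g * m ^ j * g"
proof (induction j)
  case (Suc j)
  then show ?case by (simp add: units_simps)
qed (simp add: ginv_left)

lemma subgroup_of_units_power: "subgroup_of_units H \<Longrightarrow> x \<in> H \<Longrightarrow> x ^ k \<in> H"
  by (induction k) (auto simp: subgroup_of_units_def)

lemma conj_set_iff: "(g::'a::ring_1) \<in> units \<Longrightarrow> y \<in> conj_set H g \<longleftrightarrow> g * y * ginv g \<in> H"
  unfolding conj_set_def
  by (auto simp: units_simps intro!: image_eqI[where x = "g * y * ginv g"])

lemma subgroup_of_units_conj_set:
  assumes H: "subgroup_of_units H" and g: "g \<in> units"
  shows "subgroup_of_units (conj_set H g)"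
  unfolding subgroup_of_units_def
proof (intro conjI ballI subsetI)
  have H_units: "H \<subseteq> units" using H by (simp add: subgroup_of_units_def)
  then show units: "x \<in> units" if "x \<in> conj_set H g" for x
    using that g by (auto simp: conj_set_def units_simps)
  show "1 \<in> conj_set H g" using H g by (simp add: conj_set_iff ginv_right subgroup_of_units_def)
  show "x * y \<in> conj_set H g" if "x \<in> conj_set H g" "y \<in> conj_set H g" for x y
    using that H g by (simp add: conj_set_iff conj_mult subgroup_of_units_def)
  show "ginv x \<in> conj_set H g" if x: "x \<in> conj_set H g" for x
  proof -
    have "ginv (g * x * ginv g) \<in> H" using x H g by (simp add: conj_set_iff subgroup_of_units_def)
    then show ?thesis using g units[OF x] by (simp add: conj_set_iff conj_ginv)
  qed
qed

definition subgroup_monoid :: "'a::ring_1 set \<Rightarrow> 'a monoid" where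
  "subgroup_monoid H = \<lparr>carrier = H, mult = (*), one = 1\<rparr>"

lemma group_subgroup_monoid: assumes "subgroup_of_units H" shows "group (subgroup_monoid H)"
proof (rule groupI)
  show "\<one>\<^bsub>subgroup_monoid H\<^esub> \<in> carrier (subgroup_monoid H)"
    "\<And>x y. x \<in> carrier (subgroup_monoid H) \<Longrightarrow> y \<in> carrier (subgroup_monoid H) \<Longrightarrow>
       x \<otimes>\<^bsub>subgroup_monoid H\<^esub> y \<in> carrier (subgroup_monoid H)"
    using assms by (simp_all add: subgroup_monoid_def subgroup_of_units_def)
  fix x assume "x \<in> carrier (subgroup_monoid H)"
  then have "ginv x \<in> H" "ginv x * x = 1"
    using assms ginv_left by (auto simp: subgroup_monoid_def subgroup_of_units_def)
  then show "\<exists>y\<in>carrier (subgroup_monoid H). y \<otimes>\<^bsub>subgroup_monoid H\<^esub> x = \<one>\<^bsub>subgroup_monoid H\<^esub>"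
    by (auto simp: subgroup_monoid_def)
qed (simp_all add: subgroup_monoid_def mult.assoc)

lemma inv_subgroup_monoid:
  assumes "subgroup_of_units H" "x \<in> H" shows "inv\<^bsub>subgroup_monoid H\<^esub> x = ginv x"
proof -
  interpret group "subgroup_monoid H" using group_subgroup_monoid assms(1) .
  have "ginv x \<in> H" "ginv x * x = 1" using assms ginv_left by (auto simp: subgroup_of_units_def)
  then show ?thesis using assms by (intro inv_equality) (auto simp: subgroup_monoid_def)
qed

lemma pow_subgroup_monoid: "x [^]\<^bsub>subgroup_monoid H\<^esub> (k::nat) = x ^ k"
  by (induction k) (auto simp: subgroup_monoid_def power_commutes)

text \<open>Lagrange's theorem in the finite group H/N.\<close>
lemma power_index_mem_normal:
  assumes H: "subgroup_of_units H" and N: "normal_in N H"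
    and index: "card ((\<lambda>h. (\<lambda>x. h * x) ` N) ` H) = q" and m: "m \<in> H"
  shows "m ^ q \<in> N"
proof -
  let ?H = "subgroup_monoid H"
  interpret group ?H using group_subgroup_monoid H .
  have N_sub: "subgroup_of_units N" "N \<subseteq> H" and N_conj: "\<forall>h\<in>H. \<forall>x\<in>N. h * x * ginv h \<in> N"
    using N by (auto simp: normal_in_def)
  have "subgroup N ?H"
  proof (rule subgroupI)
    show "N \<subseteq> carrier ?H" using N_sub by (simp add: subgroup_monoid_def)
    show "N \<noteq> {}" using N_sub by (auto simp: subgroup_of_units_def)
    fix a b assume a: "a \<in> N" and b: "b \<in> N"
    show "inv\<^bsub>?H\<^esub> a \<in> N" using inv_subgroup_monoid[OF H] a N_sub by (auto simp: subgroup_of_units_def)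
    show "a \<otimes>\<^bsub>?H\<^esub> b \<in> N" using a b N_sub by (auto simp: subgroup_of_units_def subgroup_monoid_def)
  qed
  then have "N \<lhd> ?H"
    using normal_inv_iff N_conj inv_subgroup_monoid[OF H] by (auto simp: subgroup_monoid_def)
  then interpret normal N ?H .
  interpret Q: group "?H Mod N" by (rule factorgroup_is_group)
  have coset: "N #>\<^bsub>?H\<^esub> h = (\<lambda>x. h * x) ` N" if "h \<in> H" for h
  proof -
    have "N #>\<^bsub>?H\<^esub> h = h <#\<^bsub>?H\<^esub> N" using that coset_eq by (simp add: subgroup_monoid_def)
    also have "\<dots> = (\<lambda>x. h * x) ` N" by (auto simp: l_coset_def subgroup_monoid_def)
    finally show ?thesis .
  qed
  have "carrier (?H Mod N) = (\<lambda>h. (\<lambda>x. h * x) ` N) ` H"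
    unfolding carrier_FactGroup using coset by (auto simp: subgroup_monoid_def)
  then have order: "order (?H Mod N) = q" using index by (simp add: order_def)
  have m_coset: "N #>\<^bsub>?H\<^esub> m \<in> carrier (?H Mod N)"
    using m unfolding carrier_FactGroup by (auto simp: subgroup_monoid_def)
  have "(N #>\<^bsub>?H\<^esub> m) [^]\<^bsub>?H Mod N\<^esub> q = N"
    using Q.pow_order_eq_1[OF m_coset] order by simp
  then have "N #>\<^bsub>?H\<^esub> (m ^ q) = N"
    using FactGroup_pow[where a = m and k = q] m pow_subgroup_monoid[where x = m and H = H and k = q] by (simp add: subgroup_monoid_def)
  moreover have "1 * m ^ q \<in> N #>\<^bsub>?H\<^esub> (m ^ q)"
    using N_sub unfolding r_coset_def subgroup_monoid_def subgroup_of_units_def by force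
  ultimately show ?thesis by simp
qed

section \<open>Twisted characters\<close>

definition equivariant_square_roots :: "('a::ring_1 \<Rightarrow> 'a) \<Rightarrow> 'a set \<Rightarrow> bool" where
  "equivariant_square_roots iota K \<longleftrightarrow>
     (\<forall>k\<in>K. \<exists>t\<in>K. t * t = k \<and> (iota k = k \<longrightarrow> iota t = t) \<and> (iota k = ginv k \<longrightarrow> iota t = ginv t))"

locale unit_involution =
  fixes iota :: "'a::ring_1 \<Rightarrow> 'a"
  assumes iota_units: "x \<in> units \<Longrightarrow> iota x \<in> units"
    and iota_mult: "x \<in> units \<Longrightarrow> y \<in> units \<Longrightarrow> iota (x * y) = iota x * iota y"
    and iota_iota: "x \<in> units \<Longrightarrow> iota (iota x) = x"
begin

lemma iota_one: "iota 1 = 1"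
proof -
  have "iota 1 = iota 1 * iota 1" using iota_mult[of 1 1] by simp
  then have "ginv (iota 1) * iota 1 = ginv (iota 1) * (iota 1 * iota 1)" by simp
  then show ?thesis using iota_units[of 1] by (simp add: ginv_left mult.assoc[symmetric])
qed

lemma iota_ginv: "x \<in> units \<Longrightarrow> iota (ginv x) = ginv (iota x)"
  by (rule ginv_unique[symmetric]) (simp_all add: iota_mult[symmetric] ginv_inverse ginv_in_units iota_one)

lemma iota_power: "x \<in> units \<Longrightarrow> iota (x ^ k) = iota x ^ k"
  by (induction k) (auto simp: iota_one iota_mult units_power)

text \<open>For the forward direction write y = s t with iota s = s and iota t = t^(-1), taking for t
  the equivariant square root of (iota y)^(-1) y, which iota inverts.\<close>
lemma trivial_on_fixed_points_iff:
  fixes theta :: "'a \<Rightarrow> 'b::comm_monoid_mult"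
  assumes K: "subgroup_of_units K"
    and theta: "\<And>x y. x \<in> K \<Longrightarrow> y \<in> K \<Longrightarrow> theta (x * y) = theta x * theta y"
    and roots: "equivariant_square_roots iota K"
  shows "(\<forall>x \<in> K \<inter> fixed_points iota. theta x = 1) \<longleftrightarrow>
         (\<forall>y\<in>K. iota y \<in> K \<longrightarrow> theta y * theta (iota y) = 1)"
proof
  have K_units: "K \<subseteq> units" and K_one: "1 \<in> K"
    and K_mult: "\<And>x y. x \<in> K \<Longrightarrow> y \<in> K \<Longrightarrow> x * y \<in> K"
    and K_ginv: "\<And>x. x \<in> K \<Longrightarrow> ginv x \<in> K"
    using K by (auto simp: subgroup_of_units_def)
  assume fixed: "\<forall>x \<in> K \<inter> fixed_points iota. theta x = 1"
  show "\<forall>y\<in>K. iota y \<in> K \<longrightarrow> theta y * theta (iota y) = 1"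
  proof (intro ballI impI)
    fix y assume y: "y \<in> K" and iy: "iota y \<in> K"
    have y_unit: "y \<in> units" and iy_unit: "iota y \<in> units" using y iy K_units by auto
    define m where "m = ginv (iota y) * y"
    have "m \<in> K" using y iy by (simp add: m_def K_mult K_ginv)
    moreover have "iota m = ginv m"
      using y_unit iy_unit by (simp add: m_def iota_mult iota_ginv iota_iota ginv_mult ginv_in_units ginv_ginv)
    ultimately obtain t where t: "t \<in> K" "t * t = m" and it: "iota t = ginv t"
      using roots unfolding equivariant_square_roots_def by blast
    have t_unit: "t \<in> units" using t K_units by auto
    define s where "s = y * ginv t"
    have s: "s \<in> K" using y t by (simp add: s_def K_mult K_ginv)
    have "iota y * t * t = y" using t iy_unit by (simp add: m_def units_simps)
    then have iy_t: "iota y * t = s" using t_unit by (metis s_def ginv_right mult.assoc mult_1_right)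
    have s_fixed: "iota s = s"
      using y_unit t_unit iy_t by (simp add: s_def iota_mult iota_ginv ginv_in_units it ginv_ginv)
    have y_eq: "y = s * t" using t_unit by (simp add: s_def units_simps)
    have iy_eq: "iota y = s * ginv t" using t_unit by (simp add: units_simps flip: iy_t)
    have "theta s = 1" "theta 1 = 1" using fixed s s_fixed K_units K_one iota_one by (auto simp: fixed_points_def)
    have "theta y = theta s * theta t" using y_eq s t theta by simp
    moreover have "theta (iota y) = theta s * theta (ginv t)" using iy_eq s t K_ginv theta by simp
    ultimately have "theta y * theta (iota y) = theta s * theta s * theta (t * ginv t)"
      using t K_ginv theta by (simp add: mult_ac)
    also have "\<dots> = 1" using \<open>theta s = 1\<close> \<open>theta 1 = 1\<close> t_unit by (simp add: ginv_right)
    finally show "theta y * theta (iota y) = 1" .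
  qed
next
  assume twisted: "\<forall>y\<in>K. iota y \<in> K \<longrightarrow> theta y * theta (iota y) = 1"
  show "\<forall>x \<in> K \<inter> fixed_points iota. theta x = 1"
  proof
    fix x assume "x \<in> K \<inter> fixed_points iota"
    then obtain t where "t \<in> K" "t * t = x" "iota t = t"
      using roots unfolding equivariant_square_roots_def fixed_points_def by blast
    then show "theta x = 1" using twisted theta by force
  qed
qed

end

lemma unit_involution_if_continuous: "continuous_involution T iota \<Longrightarrow> unit_involution iota"
  unfolding continuous_involution_def unit_involution_def by blast

locale twisted_character = unit_involution iota for iota :: "'a::ring_1 \<Rightarrow> 'a" +
  fixes H :: "'a set" and chi :: "'a \<Rightarrow> complex" and w :: 'a
  assumes H: "subgroup_of_units H"
    and chi_mult: "x \<in> H \<Longrightarrow> y \<in> H \<Longrightarrow> chi (x * y) = chi x * chi y"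
    and chi_nonzero: "x \<in> H \<Longrightarrow> chi x \<noteq> 0"
    and w: "w \<in> units"
    and iota_H: "iota ` H = conj_set H w"
    and iota_chi: "\<forall>x \<in> conj_set H w. inverse (chi (iota x)) = conj_char chi w x"
begin

lemma H_units: "H \<subseteq> units"
  using H by (simp add: subgroup_of_units_def)

lemma twist_mem_iff: assumes x: "x \<in> units" shows "w * iota x * ginv w \<in> H \<longleftrightarrow> x \<in> H"
proof -
  have "w * iota x * ginv w \<in> H \<longleftrightarrow> iota x \<in> iota ` H" using conj_set_iff[OF w] iota_H by simp
  also have "\<dots> \<longleftrightarrow> x \<in> H" using x H_units iota_iota by (auto, metis subsetD)
  finally show ?thesis .
qed

lemma chi_twist: assumes h: "h \<in> H" shows "chi (w * iota h * ginv w) = inverse (chi h)"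
proof -
  have "iota h \<in> conj_set H w" using h iota_H by blast
  then have "chi (w * iota h * ginv w) = inverse (chi (iota (iota h)))"
    using iota_chi by (simp add: conj_char_def)
  then show ?thesis using h H_units iota_iota by auto
qed

lemma conj_twist:
  assumes g: "g \<in> units" and y: "y \<in> units"
  shows "(w * iota g * ginv g) * (g * y * ginv g) * ginv (w * iota g * ginv g)
       = w * iota (g * iota y * ginv g) * ginv w"
proof -
  have "iota (g * iota y * ginv g) = iota g * y * ginv (iota g)"
    using g y by (simp add: iota_mult iota_units iota_iota iota_ginv ginv_in_units units_mult)
  then show ?thesis using g y w by (simp add: units_simps iota_units)
qed

lemma conj_char_mult:
  "g \<in> units \<Longrightarrow> x \<in> conj_set H g \<Longrightarrow> y \<in> conj_set H g \<Longrightarrow>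
    conj_char chi g (x * y) = conj_char chi g x * conj_char chi g y"
  by (simp add: conj_char_def conj_mult conj_set_iff chi_mult)

text \<open>With gamma = w iota(g) g^(-1) and h = g y g^(-1), both membership in H^gamma and the value of
  chi^gamma at h are read off from iota y through \<open>conj_twist\<close>.\<close>
lemma intertwines_twist_iff:
  assumes g: "g \<in> units"
  shows "intertwines H chi (w * iota g * ginv g) \<longleftrightarrow>
    (\<forall>y\<in>conj_set H g. iota y \<in> conj_set H g \<longrightarrow> conj_char chi g y * conj_char chi g (iota y) = 1)"
proof -
  let ?\<gamma> = "w * iota g * ginv g"
  have \<gamma>: "?\<gamma> \<in> units" using w g by (simp add: iota_units units_simps)
  have mem: "g * y * ginv g \<in> conj_set H ?\<gamma> \<longleftrightarrow> iota y \<in> conj_set H g" if y: "y \<in> units" for y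
    using g y conj_set_iff[OF \<gamma>] conj_set_iff[OF g] conj_twist twist_mem_iff
    by (simp add: iota_units units_simps)
  have val: "conj_char chi ?\<gamma> (g * y * ginv g) = inverse (conj_char chi g (iota y))"
    if y: "y \<in> units" and iy: "iota y \<in> conj_set H g" for y
    using conj_twist[OF g y] chi_twist iy conj_set_iff[OF g] by (simp add: conj_char_def)
  have K_units: "conj_set H g \<subseteq> units"
    using subgroup_of_units_conj_set[OF H g] by (simp add: subgroup_of_units_def)
  show ?thesis
  proof
    assume I: "intertwines H chi ?\<gamma>"
    show "\<forall>y\<in>conj_set H g. iota y \<in> conj_set H g \<longrightarrow> conj_char chi g y * conj_char chi g (iota y) = 1"
    proof (intro ballI impI)
      fix y assume y: "y \<in> conj_set H g" and iy: "iota y \<in> conj_set H g"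
      have y_unit: "y \<in> units" using y K_units by auto
      have "g * y * ginv g \<in> H \<inter> conj_set H ?\<gamma>" using y iy mem[OF y_unit] conj_set_iff[OF g] by simp
      then have "conj_char chi g y = inverse (conj_char chi g (iota y))"
        using I val[OF y_unit iy] unfolding intertwines_def conj_char_def by simp
      moreover have "conj_char chi g (iota y) \<noteq> 0"
        using iy chi_nonzero conj_set_iff[OF g] by (simp add: conj_char_def)
      ultimately show "conj_char chi g y * conj_char chi g (iota y) = 1" by simp
    qed
  next
    assume T: "\<forall>y\<in>conj_set H g. iota y \<in> conj_set H g \<longrightarrow> conj_char chi g y * conj_char chi g (iota y) = 1"
    show "intertwines H chi ?\<gamma>"
      unfolding intertwines_def
    proof
      fix h assume h: "h \<in> H \<inter> conj_set H ?\<gamma>"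
      define y where "y = ginv g * h * g"
      have h_eq: "h = g * y * ginv g" using g by (simp add: y_def units_simps)
      have y: "y \<in> conj_set H g" using h g by (simp add: conj_set_iff h_eq)
      have y_unit: "y \<in> units" using y K_units by auto
      have iy: "iota y \<in> conj_set H g" using h mem[OF y_unit] by (simp add: h_eq)
      have "chi h * conj_char chi g (iota y) = 1" using T y iy by (simp add: conj_char_def h_eq)
      then have "chi h = inverse (conj_char chi g (iota y))"
        using inverse_unique[of "conj_char chi g (iota y)" "chi h"] by (simp add: mult.commute)
      then show "chi h = conj_char chi ?\<gamma> h" using val[OF y_unit iy] h_eq by simp
    qed
  qed
qed

lemma fixed_trivial_iff_intertwines:
  assumes g: "g \<in> units" and roots: "equivariant_square_roots iota (conj_set H g)"
  shows "(\<forall>x \<in> conj_set H g \<inter> fixed_points iota. conj_char chi g x = 1) \<longleftrightarrow>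
    intertwines H chi (w * iota g * ginv g)"
  using trivial_on_fixed_points_iff[OF subgroup_of_units_conj_set[OF H g] conj_char_mult[OF g] roots]
    intertwines_twist_iff[OF g] by simp

end

section \<open>The ultrametric norm on A\<close>

locale ultrametric_algebra =
  fixes v :: "'f::field \<Rightarrow> real" and e :: "'f \<Rightarrow> 'a::ring_1" and n :: nat and b :: "nat \<Rightarrow> 'a"
  assumes abs_val: "abs_val v" and ultrametric: "\<And>x y. v (x + y) \<le> max (v x) (v y)"
    and csa: "central_simple_algebra e n b"
begin

abbreviation "nrm \<equiv> A_norm v e n b"
abbreviation "crd \<equiv> coord e n b"

lemma v_nonneg: "v x \<ge> 0" and v_eq_0_iff: "v x = 0 \<longleftrightarrow> x = 0" and v_mult: "v (x * y) = v x * v y"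
  using abs_val by (simp_all add: abs_val_def)

lemma v_0 [simp]: "v 0 = 0"
  by (simp add: v_eq_0_iff)

lemma v_1 [simp]: "v 1 = 1"
  using v_mult[of 1 1] v_eq_0_iff[of 1] by simp

lemma v_minus [simp]: "v (- x) = v x"
proof -
  have "v (-1) * v (-1) = 1" using v_mult[of "-1" "-1"] by simp
  then have "v (-1) = 1" using v_nonneg[of "-1"]
    by (metis abs_of_nonneg abs_square_eq_1 power2_eq_square)
  then show ?thesis using v_mult[of "-1" x] by simp
qed

lemma v_sum_le: "finite I \<Longrightarrow> (\<And>i. i \<in> I \<Longrightarrow> v (f i) \<le> M) \<Longrightarrow> 0 \<le> M \<Longrightarrow> v (sum f I) \<le> M"
proof (induction I rule: finite_induct)
  case (insert x F)
  have "v (sum f (insert x F)) = v (f x + sum f F)" using insert by simp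
  also have "\<dots> \<le> max (v (f x)) (v (sum f F))" by (rule ultrametric)
  also have "\<dots> \<le> M" using insert.IH insert.prems insert.hyps by (simp add: max_def)
  finally show ?case .
qed simp

lemma e_add: "e (x + y) = e x + e y"
  using csa unfolding central_simple_algebra_def by (elim conjE allE)

lemma e_mult: "e (x * y) = e x * e y"
  using csa unfolding central_simple_algebra_def by (elim conjE allE)

lemma e_commute: "e c * a = a * e c"
  using csa unfolding central_simple_algebra_def by (elim conjE allE)

lemma basis: "is_basis e n b"
  using csa unfolding central_simple_algebra_def by (elim conjE allE)

lemma e_0 [simp]: "e 0 = 0"
  using e_add[of 0 0] by simp

lemma e_minus: "e (- x) = - e x"
  using e_add[of "- x" x] by (simp add: eq_neg_iff_add_eq_0)

lemma e_sum: "e (sum f I) = (\<Sum>i\<in>I. e (f i))"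
  by (induction I rule: infinite_finite_induct) (auto simp: e_add)

lemma unique_coordinates: "\<exists>!c. (\<forall>i\<ge>n. c i = 0) \<and> a = (\<Sum>i<n. e (c i) * b i)"
  using basis unfolding is_basis_def by blast

lemma coord_spec: "(\<forall>i\<ge>n. crd a i = 0) \<and> a = (\<Sum>i<n. e (crd a i) * b i)"
  unfolding coord_def by (rule theI'[OF unique_coordinates])

lemma coord_eq: "(\<forall>i\<ge>n. c i = 0) \<Longrightarrow> a = (\<Sum>i<n. e (c i) * b i) \<Longrightarrow> crd a = c"
  unfolding coord_def by (rule the1_equality[OF unique_coordinates]) auto

lemma coord_add: "crd (x + y) = (\<lambda>i. crd x i + crd y i)"
proof (rule coord_eq)
  show "\<forall>i\<ge>n. crd x i + crd y i = 0" using coord_spec by simp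
  have "x + y = (\<Sum>i<n. e (crd x i) * b i) + (\<Sum>i<n. e (crd y i) * b i)"
    using coord_spec[of x] coord_spec[of y] by simp
  also have "\<dots> = (\<Sum>i<n. e (crd x i + crd y i) * b i)"
    by (simp add: e_add distrib_right sum.distrib)
  finally show "x + y = (\<Sum>i<n. e (crd x i + crd y i) * b i)" .
qed

lemma coord_minus: "crd (- x) = (\<lambda>i. - crd x i)"
proof (rule coord_eq)
  show "\<forall>i\<ge>n. - crd x i = 0" using coord_spec by simp
  have "- x = - (\<Sum>i<n. e (crd x i) * b i)" using coord_spec[of x] by simp
  then show "- x = (\<Sum>i<n. e (- crd x i) * b i)" by (simp add: e_minus sum_negf)
qed

lemma coord_mult:
  "crd (x * y) = (\<lambda>k. if k < n then \<Sum>i<n. \<Sum>j<n. crd x i * crd y j * crd (b i * b j) k else 0)"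
proof (rule coord_eq)
  have product_of_terms: "(e p * b i) * (e q * b j) = (\<Sum>k<n. e (p * q * crd (b i * b j) k) * b k)" for p q i j
  proof -
    have "(e p * b i) * (e q * b j) = e (p * q) * (b i * b j)"
      by (metis e_commute e_mult mult.assoc)
    also have "\<dots> = e (p * q) * (\<Sum>k<n. e (crd (b i * b j) k) * b k)"
      using coord_spec[of "b i * b j"] by metis
    finally show ?thesis by (simp add: sum_distrib_left e_mult mult.assoc)
  qed
  have "x * y = (\<Sum>i<n. e (crd x i) * b i) * (\<Sum>j<n. e (crd y j) * b j)"
    using coord_spec[of x] coord_spec[of y] by (intro arg_cong2[where f = "(*)"]) simp_all
  also have "\<dots> = (\<Sum>i<n. \<Sum>j<n. (e (crd x i) * b i) * (e (crd y j) * b j))"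
    by (rule sum_product)
  also have "\<dots> = (\<Sum>i<n. \<Sum>j<n. \<Sum>k<n. e (crd x i * crd y j * crd (b i * b j) k) * b k)"
    by (intro sum.cong refl product_of_terms)
  also have "\<dots> = (\<Sum>k<n. \<Sum>i<n. \<Sum>j<n. e (crd x i * crd y j * crd (b i * b j) k) * b k)"
    by (subst sum.swap) (rule sum.cong[OF refl], rule sum.swap)
  also have "\<dots> = (\<Sum>k<n. e (if k < n then \<Sum>i<n. \<Sum>j<n. crd x i * crd y j * crd (b i * b j) k else 0) * b k)"
    by (rule sum.cong) (simp_all only: e_sum sum_distrib_right lessThan_iff if_True)
  finally show "x * y = \<dots>" .
qed simp

lemma n_pos: "n > 0"
  using coord_spec[of 1] by (cases n) simp_all

lemma nrm_le_iff: "nrm x \<le> M \<longleftrightarrow> (\<forall>i<n. v (crd x i) \<le> M)"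
  unfolding A_norm_def by (subst Max_le_iff) (use n_pos in auto)

lemma coord_le_nrm: "i < n \<Longrightarrow> v (crd x i) \<le> nrm x"
  using nrm_le_iff[of x "nrm x"] by simp

lemma nrm_nonneg: "nrm x \<ge> 0"
  using coord_le_nrm[of 0 x] n_pos v_nonneg order_trans by blast

lemma nrm_eq_0_iff: "nrm x = 0 \<longleftrightarrow> x = 0"
proof
  assume "nrm x = 0"
  then have "\<forall>i<n. crd x i = 0" using coord_le_nrm v_nonneg v_eq_0_iff by (metis order_antisym)
  then show "x = 0" using coord_spec[of x] by simp
next
  assume "x = 0"
  then have "crd x = (\<lambda>_. 0)" by (intro coord_eq) auto
  then show "nrm x = 0" using nrm_le_iff[of x 0] nrm_nonneg[of x] by simp
qed

lemma nrm_0 [simp]: "nrm 0 = 0"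
  by (simp add: nrm_eq_0_iff)

lemma nrm_minus: "nrm (- x) = nrm x"
  by (simp add: A_norm_def coord_minus)

lemma nrm_diff_commute: "nrm (x - y) = nrm (y - x)"
  using nrm_minus[of "y - x"] by simp

lemma nrm_add: "nrm (x + y) \<le> max (nrm x) (nrm y)"
  unfolding nrm_le_iff coord_add
proof (intro allI impI)
  fix i assume "i < n"
  then show "v (crd x i + crd y i) \<le> max (nrm x) (nrm y)"
    using ultrametric[of "crd x i" "crd y i"] coord_le_nrm[of i x] coord_le_nrm[of i y] by linarith
qed

lemma nrm_add_le: "nrm x \<le> r \<Longrightarrow> nrm y \<le> r \<Longrightarrow> nrm (x + y) \<le> r"
  using nrm_add[of x y] by linarith

sublocale A: Metric_space UNIV "\<lambda>x y. nrm (x - y)"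
proof
  fix x y z :: 'a
  show "0 \<le> nrm (x - y)" by (rule nrm_nonneg)
  show "nrm (x - y) = nrm (y - x)" by (rule nrm_diff_commute)
  show "(nrm (x - y) = 0) = (x = y)" by (simp add: nrm_eq_0_iff)
  have "nrm (x - z) \<le> max (nrm (x - y)) (nrm (y - z))" using nrm_add[of "x - y" "y - z"] by simp
  then show "nrm (x - z) \<le> nrm (x - y) + nrm (y - z)"
    using nrm_nonneg[of "x - y"] nrm_nonneg[of "y - z"] by linarith
qed

definition mult_bound :: real where
  "mult_bound = 1 + (\<Sum>i<n. \<Sum>j<n. \<Sum>k<n. v (crd (b i * b j) k))"

lemma mult_bound_pos: "mult_bound > 0"
  unfolding mult_bound_def by (simp add: sum_nonneg v_nonneg add_pos_nonneg)

lemma structure_constant_le: "i < n \<Longrightarrow> j < n \<Longrightarrow> k < n \<Longrightarrow> v (crd (b i * b j) k) \<le> mult_bound"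
proof -
  assume ijk: "i < n" "j < n" "k < n"
  have "v (crd (b i * b j) k) \<le> (\<Sum>k<n. v (crd (b i * b j) k))"
    using ijk by (intro member_le_sum) (auto simp: v_nonneg)
  also have "\<dots> \<le> (\<Sum>j<n. \<Sum>k<n. v (crd (b i * b j) k))"
    using ijk by (intro member_le_sum[where f = "\<lambda>j. \<Sum>k<n. v (crd (b i * b j) k)"])
      (auto simp: v_nonneg sum_nonneg)
  also have "\<dots> \<le> (\<Sum>i<n. \<Sum>j<n. \<Sum>k<n. v (crd (b i * b j) k))"
    using ijk by (intro member_le_sum[where f = "\<lambda>i. \<Sum>j<n. \<Sum>k<n. v (crd (b i * b j) k)"])
      (auto simp: v_nonneg sum_nonneg)
  finally show ?thesis unfolding mult_bound_def by simp
qed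

lemma nrm_mult: "nrm (x * y) \<le> mult_bound * nrm x * nrm y"
  unfolding nrm_le_iff
proof (intro allI impI)
  fix k assume k: "k < n"
  have M: "0 \<le> mult_bound * nrm x * nrm y" using mult_bound_pos nrm_nonneg by simp
  have "v (crd x i * crd y j * crd (b i * b j) k) \<le> mult_bound * nrm x * nrm y"
    if "i \<in> {..<n}" "j \<in> {..<n}" for i j
  proof -
    have "v (crd x i * crd y j * crd (b i * b j) k) = v (crd x i) * v (crd y j) * v (crd (b i * b j) k)"
      by (simp add: v_mult)
    also have "\<dots> \<le> nrm x * nrm y * mult_bound"
      using that k coord_le_nrm[of i x] coord_le_nrm[of j y] structure_constant_le[of i j k]
      by (intro mult_mono) (auto simp: v_nonneg nrm_nonneg)
    finally show ?thesis by (simp add: mult_ac)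
  qed
  then have "v (\<Sum>i<n. \<Sum>j<n. crd x i * crd y j * crd (b i * b j) k) \<le> mult_bound * nrm x * nrm y"
    by (intro v_sum_le[OF _ _ M]) auto
  then show "v (crd (x * y) k) \<le> mult_bound * nrm x * nrm y" using k by (subst coord_mult[of x y]) simp
qed

lemma nrm_mult_le: "nrm x \<le> X \<Longrightarrow> nrm y \<le> Y \<Longrightarrow> nrm (x * y) \<le> mult_bound * X * Y"
proof -
  assume "nrm x \<le> X" "nrm y \<le> Y"
  then have "mult_bound * nrm x * nrm y \<le> mult_bound * X * Y"
    using mult_bound_pos nrm_nonneg[of x] nrm_nonneg[of y]
    by (intro mult_mono mult_left_mono) (auto intro: order_trans)
  then show ?thesis using nrm_mult[of x y] by linarith
qed

lemma nrm_mult3: "nrm (x * y * z) \<le> mult_bound * mult_bound * nrm x * nrm y * nrm z"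
  using nrm_mult_le[OF nrm_mult[of x y] order_refl[of "nrm z"]] by (simp add: mult_ac)

lemma nrm_mult_sub_one_le:
  assumes "nrm (a - 1) \<le> r" "nrm (c - 1) \<le> r" "mult_bound * r \<le> 1" "0 \<le> r"
  shows "nrm (a * c - 1) \<le> r"
proof -
  have "nrm ((a - 1) * (c - 1)) \<le> mult_bound * r * r" using nrm_mult_le assms by blast
  also have "\<dots> \<le> r" using assms mult_right_mono[of "mult_bound * r" 1 r] by simp
  finally have "nrm ((a - 1) * (c - 1)) \<le> r" .
  moreover have "a * c - 1 = (a - 1) * (c - 1) + ((a - 1) + (c - 1))" by (simp add: algebra_simps)
  ultimately show ?thesis using assms by (metis nrm_add_le)
qed

text \<open>The identity x^(-1) - 1 = (1 - x) + x^(-1) (1 - x)^2 makes inversion preserve small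
  neighbourhoods of 1, given a bound B on the norm of x^(-1).\<close>
lemma nrm_ginv_sub_one_le:
  assumes x: "x \<in> units" and "nrm (x - 1) \<le> r" "nrm (ginv x) \<le> B"
    and "mult_bound * r \<le> 1" "B * mult_bound * mult_bound * r \<le> 1" "0 \<le> r"
  shows "nrm (ginv x - 1) \<le> r"
proof -
  have "ginv x * ((1 - x) * (1 - x)) = ginv x - ginv x * x - ginv x * x + ginv x * x * x"
    by (simp add: algebra_simps)
  then have eq: "ginv x - 1 = (1 - x) + ginv x * ((1 - x) * (1 - x))"
    using x by (simp add: ginv_left)
  have r1: "nrm (1 - x) \<le> r" using assms by (simp add: nrm_diff_commute)
  have "nrm ((1 - x) * (1 - x)) \<le> mult_bound * r * r" using nrm_mult_le r1 by blast
  then have "nrm (ginv x * ((1 - x) * (1 - x))) \<le> mult_bound * B * (mult_bound * r * r)"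
    using nrm_mult_le assms by blast
  also have "\<dots> = (B * mult_bound * mult_bound * r) * r" by (simp add: mult_ac)
  also have "\<dots> \<le> r" using assms mult_right_mono[of "B * mult_bound * mult_bound * r" 1 r] by simp
  finally show ?thesis unfolding eq using r1 by (intro nrm_add_le)
qed

lemma limitin_lipschitz:
  assumes "limitin A.mtopology f t sequentially" and "\<And>l. nrm (f' l - t') \<le> C * nrm (f l - t)"
    and "C \<ge> 0"
  shows "limitin A.mtopology f' t' sequentially"
  unfolding A.limit_metric_sequentially
proof (intro conjI allI impI UNIV_I)
  fix \<epsilon> :: real assume "\<epsilon> > 0"
  then have "\<epsilon> / (C + 1) > 0" using assms(3) by simp
  then obtain L where L: "\<forall>l\<ge>L. nrm (f l - t) < \<epsilon> / (C + 1)"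
    using assms(1) unfolding A.limit_metric_sequentially by blast
  have "nrm (f' l - t') < \<epsilon>" if "l \<ge> L" for l
  proof -
    have "nrm (f' l - t') \<le> C * (\<epsilon> / (C + 1))"
      using assms(2)[of l] L that assms(3) by (meson less_eq_real_def mult_left_mono order_trans)
    also have "\<dots> < \<epsilon>" using \<open>\<epsilon> > 0\<close> assms(3) by (simp add: field_simps)
    finally show ?thesis .
  qed
  then show "\<exists>L. \<forall>l\<ge>L. f' l \<in> UNIV \<and> nrm (f' l - t') < \<epsilon>" by blast
qed

lemma limitin_mult_both_sides:
  assumes "limitin A.mtopology f u sequentially"
  shows "limitin A.mtopology (\<lambda>l. a * f l * c) (a * u * c) sequentially"
proof (rule limitin_lipschitz[OF assms])
  fix l
  have "a * f l * c - a * u * c = a * (f l - u) * c" by (simp add: algebra_simps)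
  then show "nrm (a * f l * c - a * u * c) \<le> (mult_bound * mult_bound * nrm a * nrm c) * nrm (f l - u)"
    using nrm_mult3[of a "f l - u" c] by (simp add: mult_ac)
qed (simp add: mult_bound_pos nrm_nonneg)

lemma limitin_ginv:
  assumes lim: "limitin A.mtopology s t sequentially" and s: "\<And>l. s l \<in> units" and t: "t \<in> units"
    and bound: "\<And>l. nrm (ginv (s l)) \<le> B"
  shows "limitin A.mtopology (\<lambda>l. ginv (s l)) (ginv t) sequentially"
proof (rule limitin_lipschitz[OF lim])
  fix l
  have "ginv (s l) - ginv t = ginv (s l) * (t - s l) * ginv t"
    using s[of l] t by (simp add: algebra_simps ginv_inverse mult.assoc)
  then have "nrm (ginv (s l) - ginv t) \<le> mult_bound * mult_bound * B * nrm (t - s l) * nrm (ginv t)"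
    using nrm_mult3[of "ginv (s l)" "t - s l" "ginv t"] bound[of l] mult_bound_pos
      nrm_nonneg[of "t - s l"] nrm_nonneg[of "ginv t"]
    by (smt (verit) mult_left_mono mult_right_mono mult_nonneg_nonneg)
  then show "nrm (ginv (s l) - ginv t) \<le> (mult_bound * mult_bound * B * nrm (ginv t)) * nrm (s l - t)"
    by (simp add: nrm_diff_commute mult_ac)
  show "mult_bound * mult_bound * B * nrm (ginv t) \<ge> 0"
    using bound[of 0] nrm_nonneg[of "ginv (s 0)"] nrm_nonneg[of "ginv t"] mult_bound_pos by simp
qed

lemma G_top_eq: "G_top v e n b = subtopology A.mtopology units"
  by (simp add: G_top_def A_top_def)

lemma limitin_continuous_map_units:
  assumes phi: "continuous_map (G_top v e n b) (G_top v e n b) phi"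
    and lim: "limitin A.mtopology s t sequentially" and "\<And>l. s l \<in> units" "t \<in> units"
  shows "limitin A.mtopology (\<lambda>l. phi (s l)) (phi t) sequentially"
proof -
  have "limitin (G_top v e n b) s t sequentially"
    unfolding G_top_eq limitin_subtopology using assms by auto
  then have "limitin (G_top v e n b) (phi \<circ> s) (phi t) sequentially"
    by (rule continuous_map_limit[OF phi])
  then show ?thesis unfolding G_top_eq limitin_subtopology by (simp add: o_def)
qed

end

section \<open>Equivariant square roots in an odd pro-p group\<close>

locale odd_pro_p_subgroup = ultrametric_algebra v e n b
  for v :: "'f::field \<Rightarrow> real" and e :: "'f \<Rightarrow> 'a::ring_1" and n b +
  fixes p :: nat and H :: "'a set"
  assumes p_odd: "odd p" and pro_p: "pro_p_group (G_top v e n b) p H"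
begin

lemma H_subgroup: "subgroup_of_units H"
  using pro_p by (simp add: pro_p_group_def)

lemma H_units: "H \<subseteq> units" and H_one: "1 \<in> H"
  and H_mult: "x \<in> H \<Longrightarrow> y \<in> H \<Longrightarrow> x * y \<in> H" and H_ginv: "x \<in> H \<Longrightarrow> ginv x \<in> H"
  using H_subgroup by (simp_all add: subgroup_of_units_def)

lemma H_compact: "compactin A.mtopology H"
  using pro_p by (simp add: pro_p_group_def G_top_eq compactin_subtopology)

lemma H_bounded: "\<exists>B>0. \<forall>x\<in>H. nrm x \<le> B"
proof -
  obtain c B where cB: "H \<subseteq> A.mcball c B"
    using A.compactin_imp_mbounded[OF H_compact] unfolding A.mbounded_def by blast
  have "nrm x \<le> max 1 (max B (nrm c))" if "x \<in> H" for x
  proof -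
    have "nrm (x - c) \<le> B" using cB that by (auto simp: nrm_diff_commute)
    moreover have "nrm x \<le> max (nrm (x - c)) (nrm c)" using nrm_add[of "x - c" c] by simp
    ultimately show ?thesis by linarith
  qed
  then show ?thesis by (intro exI[of _ "max 1 (max B (nrm c))"]) auto
qed

definition H_bound :: real where
  "H_bound = (SOME B. B > 0 \<and> (\<forall>x\<in>H. nrm x \<le> B))"

lemma H_bound_pos: "H_bound > 0" and nrm_le_H_bound: "x \<in> H \<Longrightarrow> nrm x \<le> H_bound"
  using someI_ex[OF H_bounded[unfolded Bex_def]] unfolding H_bound_def by auto

text \<open>For small r this is an open normal subgroup of H, so the pro-p hypothesis applies to it.\<close>
definition core_ball :: "real \<Rightarrow> 'a set" where
  "core_ball r = {x \<in> H. \<forall>h\<in>H. nrm (h * x * ginv h - 1) \<le> r}"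

lemma core_ball_subset: "core_ball r \<subseteq> H"
  by (auto simp: core_ball_def)

context
  fixes r :: real
  assumes r: "0 < r" "mult_bound * r \<le> 1" "H_bound * mult_bound * mult_bound * r \<le> 1"
begin

lemma core_ball_normal: "normal_in (core_ball r) H"
proof -
  have conj_H: "h * x * ginv h \<in> H" if "h \<in> H" "x \<in> H" for h x
    using that by (simp add: H_mult H_ginv)
  have one: "1 \<in> core_ball r"
    using H_one H_units r(1) by (auto simp: core_ball_def ginv_right subset_iff)
  have mult: "x * y \<in> core_ball r" if "x \<in> core_ball r" "y \<in> core_ball r" for x y
  proof -
    have "nrm (h * (x * y) * ginv h - 1) \<le> r" if h: "h \<in> H" for h
    proof -
      have "nrm (h * x * ginv h - 1) \<le> r" "nrm (h * y * ginv h - 1) \<le> r"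
        using \<open>x \<in> core_ball r\<close> \<open>y \<in> core_ball r\<close> h by (auto simp: core_ball_def)
      then show ?thesis
        unfolding conj_mult[OF subsetD[OF H_units h]] using r by (simp add: nrm_mult_sub_one_le)
    qed
    then show ?thesis using that by (auto simp: core_ball_def H_mult)
  qed
  have ginv: "ginv x \<in> core_ball r" if x: "x \<in> core_ball r" for x
  proof -
    have xH: "x \<in> H" using x by (simp add: core_ball_def)
    have "nrm (h * ginv x * ginv h - 1) \<le> r" if h: "h \<in> H" for h
    proof -
      have "h * x * ginv h \<in> units" "nrm (h * x * ginv h - 1) \<le> r"
        "nrm (ginv (h * x * ginv h)) \<le> H_bound"
        using conj_H[OF h xH] x h H_units by (auto simp: core_ball_def nrm_le_H_bound H_ginv)
      then show ?thesis
        unfolding conj_ginv[OF subsetD[OF H_units h] subsetD[OF H_units xH]]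
        using r by (simp add: nrm_ginv_sub_one_le)
    qed
    then show ?thesis using xH by (auto simp: core_ball_def H_ginv)
  qed
  have normal: "h * x * ginv h \<in> core_ball r" if h: "h \<in> H" and x: "x \<in> core_ball r" for h x
  proof -
    have xH: "x \<in> H" using x by (simp add: core_ball_def)
    have "nrm (h' * (h * x * ginv h) * ginv h' - 1) \<le> r" if h': "h' \<in> H" for h'
    proof -
      have "h' * (h * x * ginv h) * ginv h' = (h' * h) * x * ginv (h' * h)"
        using H_units h h' by (intro conj_conj) auto
      then show ?thesis using x H_mult[OF h' h] by (simp add: core_ball_def)
    qed
    then show ?thesis using conj_H[OF h xH] by (auto simp: core_ball_def)
  qed
  show ?thesis
    unfolding normal_in_def subgroup_of_units_def
    using one mult ginv normal H_units by (auto simp: core_ball_def)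
qed

lemma core_ball_open: "openin (subtopology (G_top v e n b) H) (core_ball r)"
proof -
  define \<delta> where "\<delta> = r / (mult_bound * mult_bound * H_bound * H_bound)"
  have \<delta>: "\<delta> > 0" using r mult_bound_pos H_bound_pos by (simp add: \<delta>_def)
  have near: "y \<in> core_ball r" if x: "x \<in> core_ball r" and y: "y \<in> H" and xy: "nrm (x - y) < \<delta>" for x y
  proof -
    have "nrm (h * y * ginv h - 1) \<le> r" if h: "h \<in> H" for h
    proof -
      have "nrm (h * (y - x) * ginv h) \<le> mult_bound * mult_bound * nrm h * nrm (y - x) * nrm (ginv h)"
        by (rule nrm_mult3)
      also have "\<dots> \<le> mult_bound * mult_bound * H_bound * \<delta> * H_bound"
      proof -
        have "nrm (y - x) \<le> \<delta>" using xy by (simp add: nrm_diff_commute)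
        moreover have "nrm h \<le> H_bound" "nrm (ginv h) \<le> H_bound" using h nrm_le_H_bound H_ginv by auto
        ultimately show ?thesis
          using mult_bound_pos \<delta> H_bound_pos nrm_nonneg[of h] nrm_nonneg[of "y - x"] nrm_nonneg[of "ginv h"]
          by (intro mult_mono mult_left_mono) (auto intro: mult_nonneg_nonneg)
      qed
      also have "\<dots> = r" unfolding \<delta>_def using mult_bound_pos H_bound_pos by (simp add: field_simps)
      finally have "nrm (h * (y - x) * ginv h) \<le> r" .
      moreover have "nrm (h * x * ginv h - 1) \<le> r" using x h by (simp add: core_ball_def)
      moreover have "h * y * ginv h - 1 = h * (y - x) * ginv h + (h * x * ginv h - 1)"
        by (simp add: algebra_simps)
      ultimately show ?thesis using nrm_add_le by metis
    qed
    then show ?thesis using y by (simp add: core_ball_def)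
  qed
  have "core_ball r = (\<Union>x\<in>core_ball r. A.mball x \<delta>) \<inter> H"
  proof
    show "core_ball r \<subseteq> (\<Union>x\<in>core_ball r. A.mball x \<delta>) \<inter> H"
      using \<delta> core_ball_subset by auto
    show "(\<Union>x\<in>core_ball r. A.mball x \<delta>) \<inter> H \<subseteq> core_ball r"
      using near by (auto simp: A.mball_def)
  qed
  moreover have "openin A.mtopology (\<Union>x\<in>core_ball r. A.mball x \<delta>)" by blast
  moreover have "subtopology (G_top v e n b) H = subtopology A.mtopology H"
    using H_units by (simp add: G_top_eq subtopology_subtopology Int_absorb1)
  ultimately show ?thesis by (metis openin_subtopology)
qed

lemma power_mem_core_ball: "x \<in> core_ball r \<Longrightarrow> x ^ j \<in> core_ball r"
  using core_ball_normal subgroup_of_units_power by (auto simp: normal_in_def)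

end

lemma p_power_near_one:
  assumes m: "m \<in> H" and \<epsilon>: "\<epsilon> > 0"
  shows "\<exists>k. \<forall>j\<ge>k. nrm (m ^ p ^ j - 1) \<le> \<epsilon>"
proof -
  define r where "r = min \<epsilon> (min (1 / mult_bound) (1 / (H_bound * mult_bound * mult_bound)))"
  have r_le: "r \<le> 1 / mult_bound" "r \<le> 1 / (H_bound * mult_bound * mult_bound)"
    by (simp_all add: r_def)
  have r: "0 < r" "mult_bound * r \<le> 1" "H_bound * mult_bound * mult_bound * r \<le> 1"
    using \<epsilon> r_le mult_bound_pos H_bound_pos by (simp_all add: r_def field_simps)
  obtain k where "card ((\<lambda>h. (\<lambda>x. h * x) ` core_ball r) ` H) = p ^ k"
    using pro_p core_ball_normal[OF r] core_ball_open[OF r] unfolding pro_p_group_def by blast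
  then have mk: "m ^ p ^ k \<in> core_ball r"
    using power_index_mem_normal[OF H_subgroup core_ball_normal[OF r] _ m] by blast
  have "nrm (m ^ p ^ j - 1) \<le> \<epsilon>" if "j \<ge> k" for j
  proof -
    have "m ^ p ^ j = (m ^ p ^ k) ^ p ^ (j - k)"
      using that by (simp add: power_mult[symmetric] power_add[symmetric])
    then have "m ^ p ^ j \<in> core_ball r" using power_mem_core_ball[OF r mk] by simp
    then show ?thesis using H_one by (force simp: core_ball_def r_def)
  qed
  then show ?thesis by blast
qed

text \<open>Since p is odd, (m^((p^j+1)/2))^2 = m^(p^j) m, which tends to m; a convergent subsequence,
  given by compactness of H, therefore converges to a square root of m.\<close>
lemma sqrt_in_H:
  assumes m: "m \<in> H"
  shows "\<exists>u\<in>H. u * u = m \<and>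
    (\<exists>r. strict_mono r \<and> limitin A.mtopology (\<lambda>l. m ^ ((p ^ r l + 1) div 2)) u sequentially)"
proof -
  have "range (\<lambda>j. m ^ ((p ^ j + 1) div 2)) \<subseteq> H" using subgroup_of_units_power[OF H_subgroup m] by auto
  then obtain u r where u: "u \<in> H" and r: "strict_mono r"
    and "limitin A.mtopology ((\<lambda>j. m ^ ((p ^ j + 1) div 2)) \<circ> r) u sequentially"
    using H_compact unfolding A.compactin_sequentially by blast
  then have lim: "limitin A.mtopology (\<lambda>l. m ^ ((p ^ r l + 1) div 2)) u sequentially"
    by (simp only: o_def)
  have small: "nrm (u * u - m) \<le> \<epsilon>" if \<epsilon>: "\<epsilon> > 0" for \<epsilon>
  proof -
    define \<eta> where "\<eta> = \<epsilon> / (mult_bound * H_bound)"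
    have \<eta>: "\<eta> > 0" and \<epsilon>_eq: "\<epsilon> = mult_bound * \<eta> * H_bound"
      using \<epsilon> mult_bound_pos H_bound_pos by (simp_all add: \<eta>_def)
    obtain L where L: "\<forall>l\<ge>L. nrm (m ^ ((p ^ r l + 1) div 2) - u) < \<eta>"
      using lim \<eta> unfolding A.limit_metric_sequentially by blast
    obtain K where K: "\<forall>j\<ge>K. nrm (m ^ p ^ j - 1) \<le> \<eta>" using p_power_near_one[OF m \<eta>] by blast
    define j where "j = r (max L K)"
    define s where "s = m ^ ((p ^ j + 1) div 2)"
    have s_near: "nrm (u - s) \<le> \<eta>"
      using L by (simp add: s_def j_def nrm_diff_commute less_imp_le)
    have s: "s \<in> H" using subgroup_of_units_power[OF H_subgroup m] by (simp add: s_def)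
    have "odd (p ^ j)" using p_odd by simp
    then have "(p ^ j + 1) div 2 + (p ^ j + 1) div 2 = p ^ j + 1" by presburger
    then have "s * s = m ^ (p ^ j + 1)" by (metis s_def power_add)
    then have eq: "u * u - m = (u - s) * u + s * (u - s) + (m ^ p ^ j - 1) * m"
      by (simp add: algebra_simps power_commutes)
    have "nrm (m ^ p ^ j - 1) \<le> \<eta>"
      using K seq_suble[OF r, of "max L K"] by (simp add: j_def)
    then have "nrm ((m ^ p ^ j - 1) * m) \<le> \<epsilon>"
      using nrm_mult_le[OF _ nrm_le_H_bound[OF m]] \<epsilon>_eq by simp
    moreover have "nrm ((u - s) * u) \<le> \<epsilon>"
      using nrm_mult_le[OF s_near nrm_le_H_bound[OF u]] \<epsilon>_eq by simp
    moreover have "nrm (s * (u - s)) \<le> \<epsilon>"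
      using nrm_mult_le[OF nrm_le_H_bound[OF s] s_near] \<epsilon>_eq by (simp add: mult_ac)
    ultimately show ?thesis unfolding eq by (intro nrm_add_le)
  qed
  have "nrm (u * u - m) = 0"
    using small[of "nrm (u * u - m) / 2"] nrm_nonneg[of "u * u - m"] by linarith
  then have "u * u = m" by (simp add: nrm_eq_0_iff)
  then show ?thesis using u r lim by blast
qed

lemma nrm_ginv_conj_le:
  assumes g: "g \<in> units" and x: "x \<in> H"
  shows "nrm (ginv (ginv g * x * g)) \<le> mult_bound * mult_bound * nrm (ginv g) * H_bound * nrm g"
proof -
  have "ginv (ginv g * x * g) = ginv g * ginv x * g"
    using conj_ginv[OF ginv_in_units[OF g], of x] g x H_units by (auto simp: ginv_ginv)
  then show ?thesis
    using nrm_mult_le[OF nrm_mult_le[OF order_refl[of "nrm (ginv g)"] nrm_le_H_bound[OF H_ginv[OF x]]]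
        order_refl[of "nrm g"]]
    by (simp add: mult_ac)
qed

lemma equivariant_square_roots_conj_set:
  assumes iota: "continuous_involution (G_top v e n b) iota" and g: "g \<in> units"
  shows "equivariant_square_roots iota (conj_set H g)"
  unfolding equivariant_square_roots_def
proof
  interpret unit_involution iota using iota by (rule unit_involution_if_continuous)
  fix k assume k: "k \<in> conj_set H g"
  define m where "m = g * k * ginv g"
  have m: "m \<in> H" using k g by (simp add: m_def conj_set_iff)
  have k_eq: "k = ginv g * m * g" using g by (simp add: m_def units_simps)
  obtain u r where u: "u \<in> H" "u * u = m" and r: "strict_mono r"
    and lim_u: "limitin A.mtopology (\<lambda>l. m ^ ((p ^ r l + 1) div 2)) u sequentially"
    using sqrt_in_H[OF m] by blast
  define t where "t = ginv g * u * g"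
  define s where "s = (\<lambda>l. k ^ ((p ^ r l + 1) div 2))"
  have K_units: "conj_set H g \<subseteq> units"
    using subgroup_of_units_conj_set[OF H_subgroup g] by (simp add: subgroup_of_units_def)
  have t: "t \<in> conj_set H g" using u by (simp add: t_def conj_set_def)
  then have t_unit: "t \<in> units" using K_units by blast
  have k_unit: "k \<in> units" using k K_units by blast
  have s_unit: "s l \<in> units" for l using k_unit by (simp add: s_def units_power)
  have "t * t = k" using g by (simp add: t_def k_eq units_simps flip: u(2))
  have s_eq: "s = (\<lambda>l. ginv g * m ^ ((p ^ r l + 1) div 2) * g)"
    by (simp add: s_def k_eq conj_power[OF g])
  have lim_s: "limitin A.mtopology s t sequentially"
    unfolding s_eq t_def by (rule limitin_mult_both_sides[OF lim_u])
  have lim_iota: "limitin A.mtopology (\<lambda>l. iota (s l)) (iota t) sequentially"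
    using iota by (intro limitin_continuous_map_units[OF _ lim_s s_unit t_unit])
      (simp add: continuous_involution_def)
  have "iota t = t" if "iota k = k"
  proof -
    have "(\<lambda>l. iota (s l)) = s" using k_unit that by (simp add: s_def iota_power)
    then show ?thesis using A.limitin_metric_unique[OF lim_iota _ sequentially_bot] lim_s by simp
  qed
  moreover have "iota t = ginv t" if "iota k = ginv k"
  proof -
    have "nrm (ginv (s l)) \<le> mult_bound * mult_bound * nrm (ginv g) * H_bound * nrm g" for l
      using nrm_ginv_conj_le[OF g subgroup_of_units_power[OF H_subgroup m]] by (simp add: s_eq)
    then have "limitin A.mtopology (\<lambda>l. ginv (s l)) (ginv t) sequentially"
      by (rule limitin_ginv[OF lim_s s_unit t_unit])
    moreover have "(\<lambda>l. iota (s l)) = (\<lambda>l. ginv (s l))"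
      using k_unit that by (simp add: s_def iota_power ginv_power)
    ultimately show ?thesis using A.limitin_metric_unique[OF lim_iota _ sequentially_bot] by simp
  qed
  ultimately show "\<exists>t\<in>conj_set H g. t * t = k \<and> (iota k = k \<longrightarrow> iota t = t) \<and> (iota k = ginv k \<longrightarrow> iota t = ginv t)"
    using t \<open>t * t = k\<close> by blast
qed

end

theorem lemma6p2:
  fixes v :: "'f::field \<Rightarrow> real" and p :: nat
    and e :: "'f \<Rightarrow> 'a::ring_1" and n :: nat and b :: "nat \<Rightarrow> 'a"
    and iota :: "'a \<Rightarrow> 'a" and H :: "'a set" and chi :: "'a \<Rightarrow> complex" and w :: "'a"
  assumes F: "nonarch_local_field v p" and p_odd: "odd p"
    and A: "central_simple_algebra e n b"
    and inv: "continuous_involution (G_top v e n b) iota"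
    and H_prop: "pro_p_group (G_top v e n b) p H"
    and H_open: "openin (G_top v e n b) H"
    and chi: "character (G_top v e n b) H chi"
    and w: "w \<in> units"
    and iH: "iota ` H = conj_set H w"
    and ichi: "\<forall>x \<in> conj_set H w. inverse (chi (iota x)) = conj_char chi w x"
  shows "\<forall>g \<in> units.
           (\<forall>x \<in> conj_set H g \<inter> fixed_points iota. conj_char chi g x = 1)
           \<longleftrightarrow> intertwines H chi (w * iota g * ginv g)"
proof -
  have "abs_val v" "\<And>x y. v (x + y) \<le> max (v x) (v y)"
    using F unfolding nonarch_local_field_def by blast+
  then interpret odd_pro_p_subgroup v e n b p H
    using A p_odd H_prop by unfold_locales
  interpret twisted_character iota H chi w
    using unit_involution_if_continuous[OF inv] H_subgroup chi w iH ichi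
    by (simp add: twisted_character_def twisted_character_axioms_def character_def)
  show ?thesis
    using fixed_trivial_iff_intertwines equivariant_square_roots_conj_set[OF inv] by blast
qed

end
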